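(* Let $(x,y)$ be a $\delta$-feasible assignment, $V_0\subseteq V$, and $d=\max_{a,b\in V_0}\mathrm{dist}_G(a,b)$. After group shifting on $V_0$ one obtains a $(\delta+d)$-feasible assignment $(x',y')$ in which at most one vertex of $V_0$ has a non-integral $y'$-value, and $\mathrm{radius}_{(x',y')}(v)\le\mathrm{radius}_{(x,y)}(v)$ for every $v\in V\setminus V_0$.
   Context: $G=(V,E)$ undirected unweighted graph with shortest-path distance $\mathrm{dist}_G$, $L:V\to\mathbb{N}$, $k$ a positive integer. An assignment is a pair $x:V\times V\to\mathbb{R}_{\ge0}$, $y:V\to\mathbb{R}_{\ge0}$; it is $\delta$-feasible if: (1) $\sum_u y_u=k$; (2) $x_{u,v}\le y_u$; (3) $\sum_v x_{u,v}\le L(u)y_u$; (4) $\sum_u x_{u,v}=1$; (5) $0\le y_u\le1$; (6) $x_{u,v}=0$ whenever $\mathrm{dist}_G(u,v)>\delta$; (7) $x_{u,v}\ge0$. $\mathrm{radius}_{(x,y)}(u)$ is the largest integer $i$ such that some $v$ has $\mathrm{dist}_G(v,u)=i$ and $x_{u,v}>0$ ($0$ if none). Shifting $\alpha$ from $a$ to $b$ (where $a\neq b$, $L(a)\le L(b)$, $0<\alpha\le\min(y_a,1-y_b)$): with $\epsilon=\alpha/y_a$, for each $v$ move $\epsilon x_{a,v}$ from $x_{a,v}$ to $x_{b,v}$, and increase $y_b$ by $\alpha$, decrease $y_a$ by $\alpha$. Group shifting on $V_0=\{v_1,\dots,v_\ell\}$, indexed so that $L(v_i)\le L(v_{i+1})$: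 as long as at least two vertices of $V_0$ have fractional (non-integral) $y$-value, let $a$ be the smallest and $b$ the largest index such that $y_{v_a}$ and $y_{v_b}$ are fractional, and shift $\min(y_{v_a},1-y_{v_b})$ from $v_a$ to $v_b$. *)

theory Defs
  imports Complex_Main "HOL-Library.Extended_Nat"
begin

definition ugraph :: "'a set \<Rightarrow> ('a \<Rightarrow> 'a \<Rightarrow> bool) \<Rightarrow> bool" where
  "ugraph V E \<longleftrightarrow> finite V \<and> (\<forall>u v. E u v \<longrightarrow> u \<in> V \<and> v \<in> V) \<and> (\<forall>u v. E u v \<longrightarrow> E v u)"

definition walk :: "'a set \<Rightarrow> ('a \<Rightarrow> 'a \<Rightarrow> bool) \<Rightarrow> 'a \<Rightarrow> 'a \<Rightarrow> nat \<Rightarrow> bool" where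
  "walk V E u v n \<longleftrightarrow> (\<exists>p. length p = Suc n \<and> hd p = u \<and> last p = v \<and> set p \<subseteq> V
      \<and> (\<forall>i<n. E (p ! i) (p ! Suc i)))"

definition gdist :: "'a set \<Rightarrow> ('a \<Rightarrow> 'a \<Rightarrow> bool) \<Rightarrow> 'a \<Rightarrow> 'a \<Rightarrow> enat" where
  "gdist V E u v = (if \<exists>n. walk V E u v n then enat (LEAST n. walk V E u v n) else \<infinity>)"

definition feasible :: "'a set \<Rightarrow> ('a \<Rightarrow> 'a \<Rightarrow> bool) \<Rightarrow> ('a \<Rightarrow> nat) \<Rightarrow> nat \<Rightarrow> enat
    \<Rightarrow> ('a \<Rightarrow> 'a \<Rightarrow> real) \<Rightarrow> ('a \<Rightarrow> real) \<Rightarrow> bool" where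
  "feasible V E L k \<delta> x y \<longleftrightarrow>
     (\<Sum>u\<in>V. y u) = real k
   \<and> (\<forall>u\<in>V. \<forall>v\<in>V. x u v \<le> y u)
   \<and> (\<forall>u\<in>V. (\<Sum>v\<in>V. x u v) \<le> real (L u) * y u)
   \<and> (\<forall>v\<in>V. (\<Sum>u\<in>V. x u v) = 1)
   \<and> (\<forall>u\<in>V. 0 \<le> y u \<and> y u \<le> 1)
   \<and> (\<forall>u\<in>V. \<forall>v\<in>V. gdist V E u v > \<delta> \<longrightarrow> x u v = 0)
   \<and> (\<forall>u\<in>V. \<forall>v\<in>V. x u v \<ge> 0)"

definition radius :: "'a set \<Rightarrow> ('a \<Rightarrow> 'a \<Rightarrow> bool) \<Rightarrow> ('a \<Rightarrow> 'a \<Rightarrow> real) \<Rightarrow> 'a \<Rightarrow> nat" where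
  "radius V E x u = Max ({0} \<union> {i. \<exists>v\<in>V. gdist V E v u = enat i \<and> x u v > 0})"

definition shift :: "('a \<Rightarrow> 'a \<Rightarrow> real) \<Rightarrow> ('a \<Rightarrow> real) \<Rightarrow> 'a \<Rightarrow> 'a \<Rightarrow> real
    \<Rightarrow> ('a \<Rightarrow> 'a \<Rightarrow> real) \<times> ('a \<Rightarrow> real)" where
  "shift x y a b \<alpha> =
    (let \<epsilon> = \<alpha> / y a in
     ((\<lambda>u v. if u = a then x a v - \<epsilon> * x a v
             else if u = b then x b v + \<epsilon> * x a v
             else x u v),
      y(a := y a - \<alpha>, b := y b + \<alpha>)))"

definition fractional :: "real \<Rightarrow> bool" where
  "fractional r \<longleftrightarrow> r \<notin> \<int>"

definition gs_step :: "'a list \<Rightarrow> ('a \<Rightarrow> 'a \<Rightarrow> real) \<times> ('a \<Rightarrow> real)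
    \<Rightarrow> ('a \<Rightarrow> 'a \<Rightarrow> real) \<times> ('a \<Rightarrow> real)" where
  "gs_step vs st =
    (let x = fst st; y = snd st;
         F = {i. i < length vs \<and> fractional (y (vs ! i))} in
     if card F \<ge> 2 then
       (let a = vs ! (LEAST i. i \<in> F); b = vs ! (GREATEST i. i \<in> F) in
        shift x y a b (min (y a) (1 - y b)))
     else st)"

end

theory Submission
  imports Defs
begin

(*
  Split the feasibility constraints into the distance constraint (6) and the rest.
  A single shift from a to b with L(a) <= L(b) keeps all constraints except (6) intact
  (the load moved to b is at most L(a) times the moved opening, which b can absorb), changes
  only the rows a and b of x, and creates a positive entry x'(b,v) only where x(a,v) > 0.
  Hence along group shifting on V0 we maintain the invariant: the constraints other than (6)
  hold, rows outside V0 are unchanged, and every positive entry x'(u,v) either was positive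
  in x or has u in V0 and some w in V0 with x(w,v) > 0. Each step makes one of the two chosen
  fractional values integral, so the set of fractional indices shrinks and the procedure stops
  after finitely many steps with at most one fractional vertex. The invariant plus the triangle
  inequality dist(u,v) <= dist(u,w) + dist(w,v) <= d + delta gives (delta+d)-feasibility, and
  unchanged rows outside V0 give unchanged radii there.
*)

section \<open>The triangle inequality for graph distance\<close>

lemma walk_append:
  assumes "walk V E u w m" "walk V E w v n"
  shows "walk V E u v (m + n)"
proof -
  obtain p where p: "length p = Suc m" "hd p = u" "last p = w" "set p \<subseteq> V"
      "\<forall>i<m. E (p ! i) (p ! Suc i)"
    using assms(1) unfolding walk_def by blast
  obtain q where q: "length q = Suc n" "hd q = w" "last q = v" "set q \<subseteq> V"
      "\<forall>i<n. E (q ! i) (q ! Suc i)"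
    using assms(2) unfolding walk_def by blast
  define r where "r = butlast p @ q"
  have p_m: "p ! m = w" using p by (simp add: last_conv_nth flip: length_0_conv)
  have q_0: "q ! 0 = w" using q by (simp add: hd_conv_nth flip: length_0_conv)
  have r_nth: "r ! i = (if i < m then p ! i else q ! (i - m))" for i
    using p(1) unfolding r_def by (simp add: nth_append nth_butlast)
  have "length r = Suc (m + n)" using p(1) q(1) by (simp add: r_def)
  moreover have "hd r = u"
  proof -
    have "r \<noteq> []" "p \<noteq> []" using p(1) q(1) by (auto simp: r_def)
    then have "hd r = r ! 0" "p ! 0 = u" using p(2) by (simp_all add: hd_conv_nth)
    then show ?thesis using p_m q_0 by (cases m) (simp_all add: r_nth)
  qed
  moreover have "last r = v" using q(1,3) by (simp add: r_def flip: length_greater_0_conv)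
  moreover have "set r \<subseteq> V" using p q by (auto simp: r_def dest: in_set_butlastD)
  moreover have "E (r ! i) (r ! Suc i)" if i: "i < m + n" for i
  proof -
    consider "Suc i < m" | "Suc i = m" | "m \<le> i" by linarith
    then show ?thesis
    proof cases
      case 1 then show ?thesis using p(5) by (simp add: r_nth)
    next
      case 2 then show ?thesis using p(5) p_m q_0 by (auto simp: r_nth)
    next
      case 3
      then have "Suc i - m = Suc (i - m)" "i - m < n" using i by auto
      then show ?thesis using q(5) 3 by (simp add: r_nth)
    qed
  qed
  ultimately show ?thesis unfolding walk_def by blast
qed

lemma gdist_triangle: "gdist V E u v \<le> gdist V E u w + gdist V E w v"
proof (cases "(\<exists>n. walk V E u w n) \<and> (\<exists>n. walk V E w v n)")
  case True
  let ?m = "LEAST n. walk V E u w n" and ?n = "LEAST n. walk V E w v n"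
  have "walk V E u w ?m" "walk V E w v ?n" using True by (auto intro: LeastI)
  then have w: "walk V E u v (?m + ?n)" by (rule walk_append)
  then have "(LEAST n. walk V E u v n) \<le> ?m + ?n" by (rule Least_le)
  then show ?thesis using True w unfolding gdist_def by auto
next
  case False then show ?thesis unfolding gdist_def by auto
qed

text \<open>Constraints (1)-(5) and (7) of a feasible assignment; shifting preserves exactly these.\<close>
definition assignment_feasible ::
    "'a set \<Rightarrow> ('a \<Rightarrow> nat) \<Rightarrow> nat \<Rightarrow> ('a \<Rightarrow> 'a \<Rightarrow> real) \<Rightarrow> ('a \<Rightarrow> real) \<Rightarrow> bool" where
  "assignment_feasible V L k x y \<longleftrightarrow>
     (\<Sum>u\<in>V. y u) = real k
   \<and> (\<forall>u\<in>V. \<forall>v\<in>V. x u v \<le> y u)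
   \<and> (\<forall>u\<in>V. (\<Sum>v\<in>V. x u v) \<le> real (L u) * y u)
   \<and> (\<forall>v\<in>V. (\<Sum>u\<in>V. x u v) = 1)
   \<and> (\<forall>u\<in>V. 0 \<le> y u \<and> y u \<le> 1)
   \<and> (\<forall>u\<in>V. \<forall>v\<in>V. x u v \<ge> 0)"

lemma feasible_iff_assignment_feasible:
  "feasible V E L k \<delta> x y \<longleftrightarrow> assignment_feasible V L k x y
     \<and> (\<forall>u\<in>V. \<forall>v\<in>V. \<delta> < gdist V E u v \<longrightarrow> x u v = 0)"
  unfolding feasible_def assignment_feasible_def by blast

section \<open>A single shift\<close>

lemma shift_source: "fst (shift x y a b \<alpha>) a v = (1 - \<alpha> / y a) * x a v"
  by (simp add: shift_def Let_def algebra_simps)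

lemma shift_target: "a \<noteq> b \<Longrightarrow> fst (shift x y a b \<alpha>) b v = x b v + \<alpha> / y a * x a v"
  by (simp add: shift_def Let_def)

lemma shift_other: "u \<noteq> a \<Longrightarrow> u \<noteq> b \<Longrightarrow> fst (shift x y a b \<alpha>) u = x u"
  by (simp add: shift_def Let_def)

lemma shift_openings: "snd (shift x y a b \<alpha>) = y(a := y a - \<alpha>, b := y b + \<alpha>)"
  by (simp add: shift_def Let_def)

lemma shift_support:
  assumes "a \<noteq> b" "0 < y a" "0 \<le> \<alpha>" "\<alpha> \<le> y a"
    and "fst (shift x y a b \<alpha>) u v > 0"
  shows "x u v > 0 \<or> (u = b \<and> x a v > 0)"
proof -
  have e: "0 \<le> \<alpha> / y a" "\<alpha> / y a \<le> 1" using assms(2-4) by auto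
  consider "u = a" | "u = b" | "u \<noteq> a" "u \<noteq> b" by blast
  then show ?thesis
  proof cases
    case 1 then show ?thesis
      using assms(5) e by (simp add: shift_source zero_less_mult_iff)
  next
    case 2
    have "x a v \<le> 0 \<Longrightarrow> \<alpha> / y a * x a v \<le> 0" using e(1) mult_nonneg_nonpos by blast
    then show ?thesis using assms(1,5) 2 by (auto simp: shift_target)
  qed (use assms(5) in \<open>simp add: shift_other\<close>)
qed

text \<open>The load constraint (3) survives a shift: row b receives at most L(a) * alpha
  units of demand, which fits because L(a) \<le> L(b).\<close>
lemma shift_preserves_loads:
  assumes feas: "assignment_feasible V L k x y"
    and ab: "a \<in> V" "b \<in> V" "a \<noteq> b" "L a \<le> L b"
    and \<alpha>: "0 < y a" "0 \<le> \<alpha>" "\<alpha> \<le> y a"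
    and u: "u \<in> V"
  shows "(\<Sum>v\<in>V. fst (shift x y a b \<alpha>) u v) \<le> real (L u) * snd (shift x y a b \<alpha>) u"
proof -
  define e where "e = \<alpha> / y a"
  have e: "0 \<le> e" "e \<le> 1" "e * y a = \<alpha>" using \<alpha> by (auto simp: e_def)
  have load: "(\<Sum>v\<in>V. x w v) \<le> real (L w) * y w" if "w \<in> V" for w
    using feas that unfolding assignment_feasible_def by blast
  consider "u = a" | "u = b" | "u \<noteq> a" "u \<noteq> b" by blast
  then show ?thesis
  proof cases
    case 1
    have "(\<Sum>v\<in>V. fst (shift x y a b \<alpha>) a v) = (1 - e) * (\<Sum>v\<in>V. x a v)"
      by (simp add: shift_source sum_distrib_left e_def)
    also have "\<dots> \<le> (1 - e) * (real (L a) * y a)" using load ab(1) e by (intro mult_left_mono) auto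
    also have "\<dots> = real (L a) * (y a - \<alpha>)" using e(3) by (simp add: algebra_simps)
    finally show ?thesis using 1 ab(3) by (simp add: shift_openings)
  next
    case 2
    have "e * (\<Sum>v\<in>V. x a v) \<le> e * (real (L a) * y a)" using load ab(1) e by (intro mult_left_mono) auto
    also have "\<dots> = real (L a) * \<alpha>" using e(3) by (simp add: algebra_simps)
    also have "\<dots> \<le> real (L b) * \<alpha>" using ab(4) \<alpha> by (intro mult_right_mono) auto
    finally have "(\<Sum>v\<in>V. x b v) + e * (\<Sum>v\<in>V. x a v) \<le> real (L b) * (y b + \<alpha>)"
      using load[OF ab(2)] unfolding distrib_left by linarith
    then show ?thesis
      using 2 ab(3) by (simp add: shift_target shift_openings sum.distrib sum_distrib_left e_def)
  qed (use load u in \<open>simp add: shift_other shift_openings\<close>)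
qed

lemma shift_preserves_assignment_feasible:
  assumes feas: "assignment_feasible V L k x y" and fin: "finite V"
    and ab: "a \<in> V" "b \<in> V" "a \<noteq> b" "L a \<le> L b"
    and \<alpha>: "0 < y a" "0 \<le> \<alpha>" "\<alpha> \<le> y a" "\<alpha> \<le> 1 - y b"
  shows "assignment_feasible V L k (fst (shift x y a b \<alpha>)) (snd (shift x y a b \<alpha>))"
proof -
  define e where "e = \<alpha> / y a"
  define x' where "x' = fst (shift x y a b \<alpha>)"
  define y' where "y' = snd (shift x y a b \<alpha>)"
  have e: "0 \<le> e" "e \<le> 1" "e * y a = \<alpha>" using \<alpha> by (auto simp: e_def)
  have B: "(\<Sum>u\<in>V. y u) = real k" "\<forall>u\<in>V. \<forall>v\<in>V. x u v \<le> y u"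
     "\<forall>v\<in>V. (\<Sum>u\<in>V. x u v) = 1" "\<forall>u\<in>V. 0 \<le> y u \<and> y u \<le> 1" "\<forall>u\<in>V. \<forall>v\<in>V. x u v \<ge> 0"
    using feas unfolding assignment_feasible_def by auto
  have y'_eq: "y' u = y u - (if u = a then \<alpha> else 0) + (if u = b then \<alpha> else 0)" for u
    using ab(3) by (auto simp: y'_def shift_openings)
  have x'_eq: "x' u v = x u v - (if u = a then e * x a v else 0) + (if u = b then e * x a v else 0)"
    for u v
    using ab(3) by (auto simp: x'_def e_def shift_source shift_target shift_other algebra_simps)
  have total: "(\<Sum>u\<in>V. y' u) = real k"
    unfolding y'_eq using fin ab B(1) by (simp add: sum.distrib sum_subtractf)
  have columns: "\<forall>v\<in>V. (\<Sum>u\<in>V. x' u v) = 1"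
    unfolding x'_eq using fin ab B(3) by (simp add: sum.distrib sum_subtractf)
  have bounds: "\<forall>u\<in>V. 0 \<le> y' u \<and> y' u \<le> 1" using B(4) \<alpha> ab by (auto simp: y'_eq)
  have nonneg: "\<forall>u\<in>V. \<forall>v\<in>V. x' u v \<ge> 0"
    using B(5) ab(1) e by (auto simp: x'_eq algebra_simps intro: mult_left_le_one_le)
  have entries: "x' u v \<le> y' u" if uv: "u \<in> V" "v \<in> V" for u v
  proof -
    have xa: "x a v \<le> y a" and xu: "x u v \<le> y u" using B(2) ab(1) uv by auto
    have "(1 - e) * x a v \<le> (1 - e) * y a" by (rule mult_left_mono) (use xa e in auto)
    moreover have "e * x a v \<le> e * y a" by (rule mult_left_mono) (use xa e in auto)
    ultimately show ?thesis using xu e(3) ab(3) by (auto simp: x'_eq y'_eq algebra_simps)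
  qed
  have loads: "\<forall>u\<in>V. (\<Sum>v\<in>V. x' u v) \<le> real (L u) * y' u"
    using shift_preserves_loads[OF feas ab \<alpha>(1-3)] by (simp add: x'_def y'_def)
  show ?thesis unfolding assignment_feasible_def x'_def[symmetric] y'_def[symmetric]
    using total entries loads columns bounds nonneg by blast
qed

section \<open>Group shifting\<close>

definition fractional_indices :: "'a list \<Rightarrow> ('a \<Rightarrow> real) \<Rightarrow> nat set" where
  "fractional_indices vs y = {i. i < length vs \<and> fractional (y (vs ! i))}"

definition shifted_from ::
    "'a set \<Rightarrow> ('a \<Rightarrow> nat) \<Rightarrow> nat \<Rightarrow> ('a \<Rightarrow> 'a \<Rightarrow> real) \<Rightarrow> 'a set
      \<Rightarrow> ('a \<Rightarrow> 'a \<Rightarrow> real) \<times> ('a \<Rightarrow> real) \<Rightarrow> bool" where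
  "shifted_from V L k x V0 st \<longleftrightarrow> assignment_feasible V L k (fst st) (snd st)
     \<and> (\<forall>u\<in>V. \<forall>v\<in>V. fst st u v > 0 \<longrightarrow> x u v > 0 \<or> (u \<in> V0 \<and> (\<exists>w\<in>V0. x w v > 0)))
     \<and> (\<forall>u. u \<notin> V0 \<longrightarrow> fst st u = x u)"

text \<open>A fractional opening value in [0,1] lies strictly between 0 and 1, so both
  y a and 1 - y b are positive amounts to shift.\<close>
lemma fractional_in_open_unit:
  "fractional r \<Longrightarrow> 0 \<le> r \<Longrightarrow> r \<le> 1 \<Longrightarrow> 0 < r \<and> r < 1"
  unfolding fractional_def by (metis Ints_0 Ints_1 le_less)

lemma Least_less_Greatest:
  fixes F :: "'b::linorder set"
  assumes "finite F" "2 \<le> card F"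
  shows "(LEAST i. i \<in> F) \<in> F" "(GREATEST i. i \<in> F) \<in> F"
    "(LEAST i. i \<in> F) < (GREATEST i. i \<in> F)"
proof -
  obtain i j where ij: "i \<in> F" "j \<in> F" "i \<noteq> j"
    using assms by (metis card_le_Suc0_iff_eq not_less_eq_eq numeral_2_eq_2)
  have "F \<noteq> {}" using ij(1) by blast
  have "(LEAST i. i \<in> F) = Min F" "(GREATEST i. i \<in> F) = Max F"
    using Least_Min[of "\<lambda>i. i \<in> F"] Greatest_Max[of "\<lambda>i. i \<in> F"] assms(1) ij(1) by auto
  moreover have "Min F \<in> F" "Max F \<in> F" using assms(1) \<open>F \<noteq> {}\<close> by simp_all
  moreover have "Min F < Max F"
  proof -
    have "Min F \<le> i" "Min F \<le> j" "i \<le> Max F" "j \<le> Max F" using assms(1) ij by auto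
    then show ?thesis using ij(3) by (metis linorder_neqE order.strict_trans1 order.strict_trans2)
  qed
  ultimately show "(LEAST i. i \<in> F) \<in> F" "(GREATEST i. i \<in> F) \<in> F"
    "(LEAST i. i \<in> F) < (GREATEST i. i \<in> F)" by simp_all
qed

lemma shift_step_invariant:
  assumes inv: "shifted_from V L k x V0 (x1, y1)" and fin: "finite V" and V0: "V0 \<subseteq> V"
    and ab: "a \<in> V0" "b \<in> V0" "a \<noteq> b" "L a \<le> L b"
    and frac: "fractional (y1 a)" "fractional (y1 b)"
    and st': "st' = shift x1 y1 a b (min (y1 a) (1 - y1 b))"
  shows "shifted_from V L k x V0 st'"
    and "\<not> fractional (snd st' a) \<or> \<not> fractional (snd st' b)"
    and "\<And>u. u \<noteq> a \<Longrightarrow> u \<noteq> b \<Longrightarrow> snd st' u = y1 u"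
proof -
  define \<alpha> where "\<alpha> = min (y1 a) (1 - y1 b)"
  have feas: "assignment_feasible V L k x1 y1" and
    supp: "\<forall>u\<in>V. \<forall>v\<in>V. x1 u v > 0 \<longrightarrow> x u v > 0 \<or> (u \<in> V0 \<and> (\<exists>w\<in>V0. x w v > 0))" and
    rows: "\<forall>u. u \<notin> V0 \<longrightarrow> x1 u = x u"
    using inv unfolding shifted_from_def by auto
  have aV: "a \<in> V" and bV: "b \<in> V" using ab V0 by auto
  have "0 < y1 a \<and> y1 a < 1" "0 < y1 b \<and> y1 b < 1"
    using frac feas aV bV fractional_in_open_unit unfolding assignment_feasible_def by blast+
  then have \<alpha>: "0 < y1 a" "0 \<le> \<alpha>" "\<alpha> \<le> y1 a" "\<alpha> \<le> 1 - y1 b" by (auto simp: \<alpha>_def)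
  have y': "snd st' = y1(a := y1 a - \<alpha>, b := y1 b + \<alpha>)" by (simp add: st' \<alpha>_def shift_openings)
  have "assignment_feasible V L k (fst st') (snd st')"
    using shift_preserves_assignment_feasible[OF feas fin aV bV ab(3,4) \<alpha>] by (simp add: st' \<alpha>_def)
  moreover have "x u v > 0 \<or> (u \<in> V0 \<and> (\<exists>w\<in>V0. x w v > 0))"
    if uv: "u \<in> V" "v \<in> V" "fst st' u v > 0" for u v
  proof -
    have "x1 u v > 0 \<or> (u = b \<and> x1 a v > 0)"
      using shift_support[where x = x1 and y = y1, OF ab(3) \<alpha>(1-3)] uv(3) by (simp add: st' \<alpha>_def)
    then show ?thesis using supp uv(1,2) aV ab(1,2) by blast
  qed
  moreover have "fst st' u = x u" if "u \<notin> V0" for u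
  proof -
    have "u \<noteq> a" "u \<noteq> b" using that ab(1,2) by auto
    then show ?thesis using rows that by (simp add: st' shift_other)
  qed
  ultimately show "shifted_from V L k x V0 st'" unfolding shifted_from_def by blast
  show "\<not> fractional (snd st' a) \<or> \<not> fractional (snd st' b)"
    using ab(3) by (auto simp: y' \<alpha>_def min_def fractional_def)
  show "\<And>u. u \<noteq> a \<Longrightarrow> u \<noteq> b \<Longrightarrow> snd st' u = y1 u" by (simp add: y')
qed

lemma gs_step_decreases:
  assumes fin: "finite V" and V0: "V0 \<subseteq> V" "set vs = V0" "distinct vs" "sorted (map L vs)"
    and inv: "shifted_from V L k x V0 st"
    and two: "2 \<le> card (fractional_indices vs (snd st))"
  shows "shifted_from V L k x V0 (gs_step vs st)"
    and "card (fractional_indices vs (snd (gs_step vs st))) < card (fractional_indices vs (snd st))"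
proof -
  obtain x1 y1 where st: "st = (x1, y1)" by (cases st)
  define F where "F = fractional_indices vs y1"
  define i where "i = (LEAST i. i \<in> F)"
  define j where "j = (GREATEST i. i \<in> F)"
  have finF: "finite F" by (simp add: F_def fractional_indices_def)
  have ij: "i \<in> F" "j \<in> F" "i < j"
    using Least_less_Greatest[OF finF] two by (simp_all add: st F_def i_def j_def)
  then have len: "i < length vs" "j < length vs" by (auto simp: F_def fractional_indices_def)
  define a where "a = vs ! i"
  define b where "b = vs ! j"
  have ab: "a \<in> V0" "b \<in> V0" "a \<noteq> b" using len V0(2,3) ij(3)
    by (auto simp: a_def b_def nth_eq_iff_index_eq)
  have Lab: "L a \<le> L b"
    using sorted_nth_mono[OF V0(4), of i j] ij(3) len by (simp add: a_def b_def)
  have frac: "fractional (y1 a)" "fractional (y1 b)"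
    using ij by (auto simp: F_def fractional_indices_def a_def b_def)
  have step: "gs_step vs st = shift x1 y1 a b (min (y1 a) (1 - y1 b))"
    using two by (simp add: gs_step_def st Let_def fractional_indices_def a_def b_def i_def j_def F_def)
  note S = shift_step_invariant[OF inv[unfolded st] fin V0(1) ab Lab frac step]
  show "shifted_from V L k x V0 (gs_step vs st)" by (rule S(1))
  let ?F' = "fractional_indices vs (snd (gs_step vs st))"
  text \<open>Only the indices i and j can change status, and one of them becomes integral.\<close>
  have "?F' \<subseteq> F"
  proof
    fix l assume l: "l \<in> ?F'"
    then have l_len: "l < length vs" by (simp add: fractional_indices_def)
    show "l \<in> F"
    proof (cases "l = i \<or> l = j")
      case True then show ?thesis using ij by blast
    next
      case False
      then have "vs ! l \<noteq> a" "vs ! l \<noteq> b"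
        using l_len len V0(3) by (auto simp: a_def b_def nth_eq_iff_index_eq)
      then show ?thesis using l S(3) by (simp add: F_def fractional_indices_def)
    qed
  qed
  moreover have "i \<notin> ?F' \<or> j \<notin> ?F'" using S(2) by (auto simp: fractional_indices_def a_def b_def)
  ultimately have "?F' \<subset> F" using ij by blast
  then show "card (fractional_indices vs (snd (gs_step vs st))) < card (fractional_indices vs (snd st))"
    using finF psubset_card_mono by (auto simp: F_def st)
qed

lemma group_shifting_terminates:
  assumes fin: "finite V" and V0: "V0 \<subseteq> V" "set vs = V0" "distinct vs" "sorted (map L vs)"
    and inv: "shifted_from V L k x V0 st"
  shows "\<exists>n. shifted_from V L k x V0 ((gs_step vs ^^ n) st)
             \<and> card (fractional_indices vs (snd ((gs_step vs ^^ n) st))) \<le> 1"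
  using inv
proof (induction "card (fractional_indices vs (snd st))" arbitrary: st rule: less_induct)
  case less
  show ?case
  proof (cases "2 \<le> card (fractional_indices vs (snd st))")
    case True
    note step = gs_step_decreases[OF fin V0 less.prems True]
    obtain n where "shifted_from V L k x V0 ((gs_step vs ^^ n) (gs_step vs st))
        \<and> card (fractional_indices vs (snd ((gs_step vs ^^ n) (gs_step vs st)))) \<le> 1"
      using less.hyps[OF step(2) step(1)] by blast
    then show ?thesis by (intro exI[of _ "Suc n"]) (simp add: funpow_Suc_right del: funpow.simps)
  next
    case False then show ?thesis using less.prems by (intro exI[of _ 0]) simp
  qed
qed

text \<open>Counting fractional vertices of V0 through the list vs (which need not be distinct
  here) can only overcount.\<close>
lemma card_fractional_vertices:
  assumes "set vs = V0"
  shows "card {v \<in> V0. fractional (y v)} \<le> card (fractional_indices vs y)"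
proof -
  have "{v \<in> V0. fractional (y v)} = (\<lambda>i. vs ! i) ` fractional_indices vs y"
    using assms by (auto simp: fractional_indices_def in_set_conv_nth)
  then show ?thesis by (simp add: card_image_le fractional_indices_def)
qed

lemma support_distance_bound:
  fixes x x' :: "'a \<Rightarrow> 'a \<Rightarrow> real"
  assumes dist: "\<forall>u\<in>V. \<forall>v\<in>V. \<delta> < gdist V E u v \<longrightarrow> x u v = 0" and V0: "V0 \<subseteq> V"
    and supp: "\<forall>u\<in>V. \<forall>v\<in>V. x' u v > 0 \<longrightarrow> x u v > 0 \<or> (u \<in> V0 \<and> (\<exists>w\<in>V0. x w v > 0))"
    and nonneg: "\<forall>u\<in>V. \<forall>v\<in>V. x' u v \<ge> 0"
    and uv: "u \<in> V" "v \<in> V" and far: "\<delta> + Sup {gdist V E a b | a b. a \<in> V0 \<and> b \<in> V0} < gdist V E u v"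
  shows "x' u v = 0"
proof (rule ccontr)
  define d where "d = Sup {gdist V E a b | a b. a \<in> V0 \<and> b \<in> V0}"
  have close: "gdist V E w v \<le> \<delta>" if "w \<in> V" "x w v > 0" for w
  proof (rule ccontr)
    assume "\<not> gdist V E w v \<le> \<delta>"
    then have "x w v = 0" using dist that(1) uv(2) by (simp add: not_le)
    then show False using that(2) by simp
  qed
  assume "x' u v \<noteq> 0"
  then have "x' u v > 0" using nonneg uv by (simp add: order_less_le)
  then consider "x u v > 0" | w where "u \<in> V0" "w \<in> V0" "x w v > 0" using supp uv by blast
  then have "gdist V E u v \<le> \<delta> + d"
  proof cases
    case 1 then show ?thesis using close uv(1) by (meson add_increasing2 order_trans zero_le)
  next
    case (2 w)
    have "gdist V E u w \<le> d" unfolding d_def using 2 by (intro Sup_upper) blast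
    moreover have "gdist V E w v \<le> \<delta>" using 2 close V0 by blast
    ultimately have "gdist V E u w + gdist V E w v \<le> d + \<delta>" by (rule add_mono)
    with gdist_triangle have "gdist V E u v \<le> d + \<delta>" by (rule order_trans)
    then show ?thesis by (simp add: add.commute)
  qed
  then show False using far by (simp add: d_def)
qed

theorem mainTheorem10:
  fixes V :: "'a set" and E :: "'a \<Rightarrow> 'a \<Rightarrow> bool" and L :: "'a \<Rightarrow> nat" and k :: nat
    and \<delta> :: enat and x :: "'a \<Rightarrow> 'a \<Rightarrow> real" and y :: "'a \<Rightarrow> real"
    and V0 :: "'a set" and vs :: "'a list"
  assumes "ugraph V E" and "k > 0"
    and "feasible V E L k \<delta> x y"
    and "V0 \<subseteq> V"
    and "distinct vs" and "set vs = V0" and "sorted (map L vs)"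
  shows "\<exists>n x' y'. (x', y') = (gs_step vs ^^ n) (x, y)
           \<and> feasible V E L k (\<delta> + Sup {gdist V E a b | a b. a \<in> V0 \<and> b \<in> V0}) x' y'
           \<and> card {v \<in> V0. fractional (y' v)} \<le> 1
           \<and> (\<forall>v \<in> V - V0. radius V E x' v \<le> radius V E x v)"
proof -
  have fin: "finite V" using assms(1) unfolding ugraph_def by simp
  have feas: "assignment_feasible V L k x y"
    and dist: "\<forall>u\<in>V. \<forall>v\<in>V. \<delta> < gdist V E u v \<longrightarrow> x u v = 0"
    using assms(3) by (simp_all add: feasible_iff_assignment_feasible)
  have "shifted_from V L k x V0 (x, y)" using feas by (simp add: shifted_from_def)
  then obtain n where n: "shifted_from V L k x V0 ((gs_step vs ^^ n) (x, y))"
      "card (fractional_indices vs (snd ((gs_step vs ^^ n) (x, y)))) \<le> 1"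
    using group_shifting_terminates[OF fin assms(4,6,5,7)] by blast
  obtain x' y' where xy': "(gs_step vs ^^ n) (x, y) = (x', y')" by fastforce
  have feas': "assignment_feasible V L k x' y'"
    and supp: "\<forall>u\<in>V. \<forall>v\<in>V. x' u v > 0 \<longrightarrow> x u v > 0 \<or> (u \<in> V0 \<and> (\<exists>w\<in>V0. x w v > 0))"
    and rows: "\<forall>u. u \<notin> V0 \<longrightarrow> x' u = x u"
    using n(1) xy' by (auto simp: shifted_from_def)
  have "\<forall>u\<in>V. \<forall>v\<in>V. x' u v \<ge> 0" using feas' by (simp add: assignment_feasible_def)
  then have "feasible V E L k (\<delta> + Sup {gdist V E a b | a b. a \<in> V0 \<and> b \<in> V0}) x' y'"
    using support_distance_bound[OF dist assms(4) supp] feas'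
    by (simp add: feasible_iff_assignment_feasible)
  moreover have "card {v \<in> V0. fractional (y' v)} \<le> 1"
    using card_fractional_vertices[OF assms(6), of y'] n(2) xy' by simp
  moreover have "\<forall>v \<in> V - V0. radius V E x' v \<le> radius V E x v"
    using rows by (simp add: radius_def)
  ultimately show ?thesis using xy' by (intro exI[of _ n] exI[of _ x'] exI[of _ y']) simp
qed

end
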